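(* Let $\theta=9/10$, $k=6$ and $d\ge1$. Let $x\in\{0,1\}^{L_d}$ be such that there are at least $4$ children $i$ of the root with $$\mathbb{P}\big[X^{(1)}_i=1\ \big|\ X^{(d)}(L_{d-1}(i))=x(L_{d-1}(i))\big]\ge 0.95.$$ Then $\mathbb{P}[X^{(0)}=1\mid X^{(d)}=x]\ge 19/20$.
   Context: Broadcast (Ising) tree model: complete $k$-ary tree of depth $d$ with root $\rho$; $L_r$ = vertices at depth $r$; for a vertex $i$, $L_s(i)$ = its descendants $s$ levels below it, and $x(A)$ denotes the restriction of $x$ to the index set $A$. $\sigma_\rho$ uniform on $\{0,1\}$; each child $v$ of $u$ independently has $\sigma_v=\sigma_u$ with probability $(1+\theta)/2$ and $1-\sigma_u$ otherwise; $X^{(r)}=(\sigma_v)_{v\in L_r}$. *)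

theory Defs
  imports Complex_Main "HOL-Library.FuncSet"
begin

text \<open>A vertex at depth r is a list of length r
  with entries in {0..<k}; the root is the empty list, and the children of v
  are the lists v @ [j], j < k. So the parent of a non-root vertex v is butlast v,
  and the descendants of the root child [i] are the vertices with head i.
  Spins take values in bool, True standing for 1 and False for 0.\<close>

definition tree_level :: "nat \<Rightarrow> nat \<Rightarrow> nat list set" where
  "tree_level k r = {v. length v = r \<and> set v \<subseteq> {..<k}}"

definition tree_vertices :: "nat \<Rightarrow> nat \<Rightarrow> nat list set" where
  "tree_vertices k d = {v. length v \<le> d \<and> set v \<subseteq> {..<k}}"

definition configs :: "nat \<Rightarrow> nat \<Rightarrow> (nat list \<Rightarrow> bool) set" where
  "configs k d = PiE (tree_vertices k d) (\<lambda>_. UNIV)"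

text \<open>Probability of a configuration in the broadcast model: root uniform,
  each edge keeps the parent's value with probability (1+theta)/2.\<close>
definition bc_weight :: "real \<Rightarrow> nat \<Rightarrow> nat \<Rightarrow> (nat list \<Rightarrow> bool) \<Rightarrow> real" where
  "bc_weight \<theta> k d \<sigma> = 1/2 * (\<Prod>v \<in> tree_vertices k d - {[]}.
      (if \<sigma> v = \<sigma> (butlast v) then (1 + \<theta>) / 2 else (1 - \<theta>) / 2))"

definition bc_prob :: "real \<Rightarrow> nat \<Rightarrow> nat \<Rightarrow> ((nat list \<Rightarrow> bool) \<Rightarrow> bool) \<Rightarrow> real" where
  "bc_prob \<theta> k d E = (\<Sum>\<sigma> \<in> {\<sigma> \<in> configs k d. E \<sigma>}. bc_weight \<theta> k d \<sigma>)"

definition bc_cond_prob :: "real \<Rightarrow> nat \<Rightarrow> nat \<Rightarrow> ((nat list \<Rightarrow> bool) \<Rightarrow> bool)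
    \<Rightarrow> ((nat list \<Rightarrow> bool) \<Rightarrow> bool) \<Rightarrow> real" where
  "bc_cond_prob \<theta> k d A B = bc_prob \<theta> k d (\<lambda>\<sigma>. A \<sigma> \<and> B \<sigma>) / bc_prob \<theta> k d B"

end

theory Submission
  imports Defs
begin

(* Given the root spin, the subtrees below the root children are independent, so the
   posterior of the root factorises: P[root = 1 | x] = prod_j M_j(1) / (prod_j M_j(1) + prod_j M_j(0)),
   where M_j(b) = sum_c edge(c, b) L_j(c) and L_j(c) is the weight of the leaf values below
   child j when that child has spin c. Since the spin of a child is uniform as well,
   P[sigma_j = 1 | leaves below j] = L_j(1) / (L_j(1) + L_j(0)), so every child satisfying the
   hypothesis has L_j(1) >= 19 L_j(0). For theta = 9/10 such a child gives M_j(0) <= 19/181 M_j(1),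
   every other child still M_j(0) <= 19 M_j(1), and with four good children the posterior odds of
   the root are at least 181^4 / 19^6 > 19. *)

lemma prod_of_bool:
  "finite I \<Longrightarrow> (\<Prod>i\<in>I. of_bool (P i) :: 'a :: comm_semiring_1) = of_bool (\<forall>i\<in>I. P i)"
  by (induction I rule: finite_induct) auto

definition edge_weight :: "real \<Rightarrow> bool \<Rightarrow> bool \<Rightarrow> real" where
  "edge_weight \<theta> a b = (if a = b then (1 + \<theta>) / 2 else (1 - \<theta>) / 2)"

definition tree_weight :: "real \<Rightarrow> nat \<Rightarrow> nat \<Rightarrow> (nat list \<Rightarrow> bool) \<Rightarrow> real" where
  "tree_weight \<theta> k d \<sigma> = (\<Prod>v \<in> tree_vertices k d - {[]}. edge_weight \<theta> (\<sigma> v) (\<sigma> (butlast v)))"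

lemma bc_weight_eq: "bc_weight \<theta> k d \<sigma> = tree_weight \<theta> k d \<sigma> / 2"
  unfolding bc_weight_def tree_weight_def edge_weight_def by simp

lemma sum_edge_weight: "(\<Sum>a\<in>UNIV. edge_weight \<theta> a b) = 1"
  unfolding edge_weight_def by (cases b) (auto simp: UNIV_bool field_simps)

lemma sum_edge_weight_right: "(\<Sum>b\<in>UNIV. edge_weight \<theta> a b) = 1"
  unfolding edge_weight_def by (cases a) (auto simp: UNIV_bool field_simps)

lemma edge_weight_pos: "\<bar>\<theta>\<bar> < 1 \<Longrightarrow> edge_weight \<theta> a b > 0"
  unfolding edge_weight_def by auto

lemma tree_weight_pos: "\<bar>\<theta>\<bar> < 1 \<Longrightarrow> tree_weight \<theta> k d \<sigma> > 0"
  unfolding tree_weight_def by (intro prod_pos) (simp add: edge_weight_pos)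

lemma finite_tree_vertices: "finite (tree_vertices k d)"
proof -
  have "tree_vertices k d = {xs. set xs \<subseteq> {..<k} \<and> length xs \<le> d}"
    unfolding tree_vertices_def by auto
  then show ?thesis using finite_lists_length_le[of "{..<k}" d] by simp
qed

lemma finite_configs: "finite (configs k d)"
  unfolding configs_def by (rule finite_PiE[OF finite_tree_vertices]) simp

lemma Nil_in_tree_vertices [simp]: "[] \<in> tree_vertices k d"
  unfolding tree_vertices_def by simp

lemma tree_vertices_0: "tree_vertices k 0 = {[]}"
  unfolding tree_vertices_def by auto

lemma Cons_in_tree_vertices [simp]:
  "j # v \<in> tree_vertices k (Suc d) \<longleftrightarrow> j < k \<and> v \<in> tree_vertices k d"
  unfolding tree_vertices_def by auto

lemma tree_level_subset_vertices: "tree_level k d \<subseteq> tree_vertices k d"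
  unfolding tree_level_def tree_vertices_def by auto

lemma butlast_in_tree_vertices: "v \<in> tree_vertices k d \<Longrightarrow> butlast v \<in> tree_vertices k d"
  unfolding tree_vertices_def by (auto dest: in_set_butlastD)

lemma tree_vertices_Suc_minus_root:
  "tree_vertices k (Suc d) - {[]} = (\<Union>j<k. Cons j ` tree_vertices k d)"
proof -
  have "v \<in> (\<Union>j<k. Cons j ` tree_vertices k d)" if "v \<in> tree_vertices k (Suc d) - {[]}" for v
    using that by (cases v) auto
  then show ?thesis by auto
qed

lemma tree_level_Suc: "tree_level k (Suc d) = (\<Union>j<k. Cons j ` tree_level k d)"
proof -
  have "v \<in> (\<Union>j<k. Cons j ` tree_level k d)" if "v \<in> tree_level k (Suc d)" for v
    using that by (cases v) (auto simp: tree_level_def)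
  then show ?thesis by (auto simp: tree_level_def)
qed

lemma configs_undefined: "\<sigma> \<in> configs k d \<Longrightarrow> v \<notin> tree_vertices k d \<Longrightarrow> \<sigma> v = undefined"
  unfolding configs_def by (rule PiE_arb)

definition subtree :: "nat \<Rightarrow> nat \<Rightarrow> (nat list \<Rightarrow> bool) \<Rightarrow> nat \<Rightarrow> nat list \<Rightarrow> bool" where
  "subtree k d \<sigma> j = restrict (\<lambda>v. \<sigma> (j # v)) (tree_vertices k d)"

definition graft :: "nat \<Rightarrow> nat \<Rightarrow> bool \<Rightarrow> (nat \<Rightarrow> nat list \<Rightarrow> bool) \<Rightarrow> nat list \<Rightarrow> bool" where
  "graft k d b f = (\<lambda>v. if v = [] then b
     else if v \<in> tree_vertices k (Suc d) then f (hd v) (tl v) else undefined)"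

lemma graft_Nil [simp]: "graft k d b f [] = b"
  by (simp add: graft_def)

lemma subtree_Nil [simp]: "subtree k d \<sigma> j [] = \<sigma> [j]"
  by (simp add: subtree_def)

lemma subtree_graft:
  assumes "f \<in> PiE {..<k} (\<lambda>_. configs k d)" and "j < k"
  shows "subtree k d (graft k d b f) j = f j"
proof
  fix v
  have "f j \<in> configs k d" using assms by auto
  then show "subtree k d (graft k d b f) j v = f j v"
    using assms(2) by (cases "v \<in> tree_vertices k d") (simp_all add: subtree_def graft_def configs_undefined)
qed

lemma graft_subtree:
  assumes "\<sigma> \<in> configs k (Suc d)"
  shows "graft k d (\<sigma> []) (subtree k d \<sigma>) = \<sigma>"
proof
  fix v show "graft k d (\<sigma> []) (subtree k d \<sigma>) v = \<sigma> v"
  proof (cases "v \<in> tree_vertices k (Suc d)")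
    case True then show ?thesis by (cases v) (simp_all add: graft_def subtree_def)
  next
    case False then show ?thesis using assms by (auto simp: graft_def configs_undefined)
  qed
qed

lemma graft_bij:
  "bij_betw (\<lambda>(b, f). graft k d b f) (UNIV \<times> PiE {..<k} (\<lambda>_. configs k d)) (configs k (Suc d))"
proof (rule bij_betw_byWitness[where f' = "\<lambda>\<sigma>. (\<sigma> [], restrict (subtree k d \<sigma>) {..<k})"])
  have "restrict (subtree k d (graft k d b f)) {..<k} = f"
    if "f \<in> PiE {..<k} (\<lambda>_. configs k d)" for b f
  proof
    fix j show "restrict (subtree k d (graft k d b f)) {..<k} j = f j"
      using that subtree_graft[OF that] PiE_arb[OF that, of j] by (cases "j < k") simp_all
  qed
  then show "\<forall>a \<in> UNIV \<times> PiE {..<k} (\<lambda>_. configs k d).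
      (\<lambda>\<sigma>. (\<sigma> [], restrict (subtree k d \<sigma>) {..<k})) ((\<lambda>(b, f). graft k d b f) a) = a"
    by auto
  have "graft k d b (restrict f {..<k}) = graft k d b f" for b f
    unfolding graft_def by (intro ext) (auto simp: neq_Nil_conv)
  then show "\<forall>\<sigma> \<in> configs k (Suc d).
      (\<lambda>(b, f). graft k d b f) ((\<lambda>\<sigma>. (\<sigma> [], restrict (subtree k d \<sigma>) {..<k})) \<sigma>) = \<sigma>"
    by (simp add: graft_subtree)
  show "(\<lambda>(b, f). graft k d b f) ` (UNIV \<times> PiE {..<k} (\<lambda>_. configs k d)) \<subseteq> configs k (Suc d)"
    by (auto simp: configs_def graft_def)
  show "(\<lambda>\<sigma>. (\<sigma> [], restrict (subtree k d \<sigma>) {..<k})) ` configs k (Suc d)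
      \<subseteq> UNIV \<times> PiE {..<k} (\<lambda>_. configs k d)"
    by (auto simp: configs_def subtree_def)
qed

lemma graft_Cons: "j < k \<Longrightarrow> v \<in> tree_vertices k d \<Longrightarrow> graft k d b f (j # v) = f j v"
  by (simp add: graft_def)

lemma tree_weight_graft:
  "tree_weight \<theta> k (Suc d) (graft k d b f)
      = (\<Prod>j<k. edge_weight \<theta> (f j []) b * tree_weight \<theta> k d (f j))"
proof -
  let ?w = "\<lambda>v. edge_weight \<theta> (graft k d b f v) (graft k d b f (butlast v))"
  have "tree_weight \<theta> k (Suc d) (graft k d b f) = (\<Prod>j<k. prod ?w (Cons j ` tree_vertices k d))"
    unfolding tree_weight_def tree_vertices_Suc_minus_root
    by (rule prod.UNION_disjoint) (auto simp: finite_tree_vertices)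
  also have "\<dots> = (\<Prod>j<k. ?w [j] * prod (?w \<circ> Cons j) (tree_vertices k d - {[]}))"
    by (simp add: prod.reindex prod.remove[OF finite_tree_vertices Nil_in_tree_vertices])
  also have "\<dots> = (\<Prod>j<k. edge_weight \<theta> (f j []) b * tree_weight \<theta> k d (f j))"
    unfolding tree_weight_def
    by (intro prod.cong refl arg_cong2[where f = "(*)"])
      (auto simp: graft_Cons butlast_in_tree_vertices)
  finally show ?thesis .
qed

lemma sum_configs_Suc:
  "(\<Sum>\<sigma>\<in>configs k (Suc d). G \<sigma>) = (\<Sum>b\<in>UNIV. \<Sum>f\<in>PiE {..<k} (\<lambda>_. configs k d). G (graft k d b f))"
proof -
  have "(\<Sum>\<sigma>\<in>configs k (Suc d). G \<sigma>)
      = (\<Sum>(b, f)\<in>UNIV \<times> PiE {..<k} (\<lambda>_. configs k d). G (graft k d b f))"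
    by (subst sum.reindex_bij_betw[OF graft_bij, symmetric]) (simp add: case_prod_unfold)
  then show ?thesis by (simp add: sum.cartesian_product)
qed

lemma sum_configs_Suc_factor:
  "(\<Sum>\<sigma>\<in>configs k (Suc d). r (\<sigma> []) * (\<Prod>j<k. g j (subtree k d \<sigma> j)) * tree_weight \<theta> k (Suc d) \<sigma>)
     = (\<Sum>b\<in>UNIV. r b * (\<Prod>j<k. \<Sum>\<tau>\<in>configs k d. g j \<tau> * edge_weight \<theta> (\<tau> []) b * tree_weight \<theta> k d \<tau>))"
proof -
  have "r b * (\<Prod>j<k. g j (subtree k d (graft k d b f) j)) * tree_weight \<theta> k (Suc d) (graft k d b f)
      = r b * (\<Prod>j<k. g j (f j) * edge_weight \<theta> (f j []) b * tree_weight \<theta> k d (f j))"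
    if "f \<in> PiE {..<k} (\<lambda>_. configs k d)" for b f
    using that by (simp add: subtree_graft tree_weight_graft prod.distrib mult.assoc)
  then have "(\<Sum>\<sigma>\<in>configs k (Suc d). r (\<sigma> []) * (\<Prod>j<k. g j (subtree k d \<sigma> j)) * tree_weight \<theta> k (Suc d) \<sigma>)
      = (\<Sum>b\<in>UNIV. \<Sum>f\<in>PiE {..<k} (\<lambda>_. configs k d).
           r b * (\<Prod>j<k. g j (f j) * edge_weight \<theta> (f j []) b * tree_weight \<theta> k d (f j)))"
    unfolding sum_configs_Suc by (intro sum.cong refl) simp
  then show ?thesis
    by (simp add: prod_sum_PiE finite_configs sum_distrib_left)
qed

lemma root_spin_bij_0: "bij_betw (\<lambda>\<tau>. \<tau> []) (configs k 0) UNIV"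
proof (rule bij_betw_byWitness[where f' = "\<lambda>c v. if v = [] then c else undefined"])
  have "(if v = [] then \<tau> [] else undefined) = \<tau> v" if "\<tau> \<in> configs k 0" for \<tau> v
    using that by (cases "v = []") (simp_all add: configs_undefined tree_vertices_0)
  then show "\<forall>\<tau>\<in>configs k 0. (\<lambda>v. if v = [] then \<tau> [] else undefined) = \<tau>"
    by blast
  show "(\<lambda>c v. if v = [] then c else undefined) ` UNIV \<subseteq> configs k 0"
    by (auto simp: configs_def tree_vertices_0)
qed auto

lemma sum_edge_tree_weight:
  "(\<Sum>\<tau>\<in>configs k d. edge_weight \<theta> (\<tau> []) b * tree_weight \<theta> k d \<tau>) = 1"
proof (induction d arbitrary: b)
  case 0
  have "tree_weight \<theta> k 0 \<tau> = 1" for \<tau>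
    unfolding tree_weight_def tree_vertices_0 by simp
  then show ?case
    using sum.reindex_bij_betw[OF root_spin_bij_0, of "\<lambda>a. edge_weight \<theta> a b"]
    by (simp add: sum_edge_weight)
next
  case (Suc d)
  have "(\<Sum>\<tau>\<in>configs k (Suc d). edge_weight \<theta> (\<tau> []) b * tree_weight \<theta> k (Suc d) \<tau>)
      = (\<Sum>a\<in>UNIV. edge_weight \<theta> a b *
           (\<Prod>j<k. \<Sum>\<tau>\<in>configs k d. 1 * edge_weight \<theta> (\<tau> []) a * tree_weight \<theta> k d \<tau>))"
    using sum_configs_Suc_factor[where r = "\<lambda>a. edge_weight \<theta> a b" and g = "\<lambda>_ _. 1"] by simp
  also have "\<dots> = 1"
    using Suc.IH by (simp add: sum_edge_weight)
  finally show ?case .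
qed

definition leaf_agree :: "nat \<Rightarrow> nat \<Rightarrow> (nat list \<Rightarrow> bool) \<Rightarrow> (nat list \<Rightarrow> bool) \<Rightarrow> bool" where
  "leaf_agree k d y \<tau> \<longleftrightarrow> (\<forall>v\<in>tree_level k d. \<tau> v = y v)"

lemma leaves_agree_Suc_iff:
  "(\<forall>v\<in>tree_level k (Suc d). P (hd v) \<longrightarrow> \<sigma> v = x v)
     \<longleftrightarrow> (\<forall>j<k. P j \<longrightarrow> leaf_agree k d (\<lambda>v. x (j # v)) (subtree k d \<sigma> j))"
proof -
  have "subtree k d \<sigma> j v = \<sigma> (j # v)" if "v \<in> tree_level k d" for j v
    using that tree_level_subset_vertices by (auto simp: subtree_def)
  then show ?thesis
    unfolding leaf_agree_def tree_level_Suc by auto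
qed

definition leaf_weight :: "real \<Rightarrow> nat \<Rightarrow> nat \<Rightarrow> (nat list \<Rightarrow> bool) \<Rightarrow> bool \<Rightarrow> real" where
  "leaf_weight \<theta> k d y c
     = (\<Sum>\<tau>\<in>configs k d. of_bool (\<tau> [] = c \<and> leaf_agree k d y \<tau>) * tree_weight \<theta> k d \<tau>)"

lemma sum_configs_by_root_spin:
  "(\<Sum>\<tau>\<in>configs k d. of_bool (Q (\<tau> []) \<and> leaf_agree k d y \<tau>) * h (\<tau> []) * tree_weight \<theta> k d \<tau>)
     = (\<Sum>c\<in>UNIV. of_bool (Q c) * h c * leaf_weight \<theta> k d y c)"
proof -
  have "of_bool (Q (\<tau> []) \<and> leaf_agree k d y \<tau>) * h (\<tau> []) * tree_weight \<theta> k d \<tau>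
      = (\<Sum>c\<in>UNIV. of_bool (Q c) * h c * (of_bool (\<tau> [] = c \<and> leaf_agree k d y \<tau>) * tree_weight \<theta> k d \<tau>))"
    for \<tau>
    by (cases "\<tau> []") (simp_all add: UNIV_bool)
  then show ?thesis
    unfolding leaf_weight_def sum_distrib_left by (simp add: sum.swap[of _ UNIV])
qed

lemma bc_prob_eq_sum:
  "bc_prob \<theta> k d E = (\<Sum>\<sigma>\<in>configs k d. of_bool (E \<sigma>) * tree_weight \<theta> k d \<sigma>) / 2"
proof -
  have "{\<sigma> \<in> configs k d. E \<sigma>} = configs k d \<inter> {\<sigma>. E \<sigma>}"
    by auto
  then show ?thesis
    unfolding bc_prob_def bc_weight_eq sum_divide_distrib[symmetric]
    by (simp add: finite_configs)
qed

lemma bc_prob_Suc_factor: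
  "bc_prob \<theta> k (Suc d) (\<lambda>\<sigma>. P (\<sigma> []) \<and> (\<forall>j<k. A j (subtree k d \<sigma> j)))
     = (\<Sum>b\<in>UNIV. of_bool (P b) *
          (\<Prod>j<k. \<Sum>\<tau>\<in>configs k d. of_bool (A j \<tau>) * edge_weight \<theta> (\<tau> []) b * tree_weight \<theta> k d \<tau>)) / 2"
proof -
  have "of_bool (P (\<sigma> []) \<and> (\<forall>j<k. A j (subtree k d \<sigma> j)))
      = of_bool (P (\<sigma> [])) * (\<Prod>j<k. of_bool (A j (subtree k d \<sigma> j)) :: real)" for \<sigma>
    by (auto simp: prod_of_bool)
  then show ?thesis
    unfolding bc_prob_eq_sum
    using sum_configs_Suc_factor[where r = "\<lambda>b. of_bool (P b)" and g = "\<lambda>j \<tau>. of_bool (A j \<tau>)"]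
    by simp
qed

lemma bc_prob_child_event:
  assumes "i < k"
  shows "bc_prob \<theta> k (Suc d) (\<lambda>\<sigma>. Q (\<sigma> [i]) \<and> (\<forall>v\<in>tree_level k (Suc d). hd v = i \<longrightarrow> \<sigma> v = x v))
    = (\<Sum>c\<in>UNIV. of_bool (Q c) * leaf_weight \<theta> k d (\<lambda>v. x (i # v)) c) / 2"
proof -
  let ?A = "\<lambda>j \<tau>. j = i \<longrightarrow> Q (\<tau> []) \<and> leaf_agree k d (\<lambda>v. x (j # v)) \<tau>"
  let ?y = "\<lambda>v. x (i # v)"
  have "(\<lambda>\<sigma>. Q (\<sigma> [i]) \<and> (\<forall>v\<in>tree_level k (Suc d). hd v = i \<longrightarrow> \<sigma> v = x v))
      = (\<lambda>\<sigma>. True \<and> (\<forall>j<k. ?A j (subtree k d \<sigma> j)))"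
    using assms leaves_agree_Suc_iff[of k d "\<lambda>j. j = i" _ x] by auto
  then have "bc_prob \<theta> k (Suc d) (\<lambda>\<sigma>. Q (\<sigma> [i]) \<and> (\<forall>v\<in>tree_level k (Suc d). hd v = i \<longrightarrow> \<sigma> v = x v))
      = (\<Sum>b\<in>UNIV. of_bool True * (\<Prod>j<k. \<Sum>\<tau>\<in>configs k d.
           of_bool (?A j \<tau>) * edge_weight \<theta> (\<tau> []) b * tree_weight \<theta> k d \<tau>)) / 2"
    using bc_prob_Suc_factor[where P = "\<lambda>_. True" and A = ?A] by (simp only:)
  also have "\<dots> = (\<Sum>b\<in>UNIV. \<Sum>c\<in>UNIV. of_bool (Q c) * edge_weight \<theta> c b * leaf_weight \<theta> k d ?y c) / 2"
  proof -
    \<comment> \<open>the unconstrained subtrees j \<noteq> i integrate to 1\<close>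
    have "(\<Sum>\<tau>\<in>configs k d. of_bool (?A j \<tau>) * edge_weight \<theta> (\<tau> []) b * tree_weight \<theta> k d \<tau>)
        = (if j = i then \<Sum>c\<in>UNIV. of_bool (Q c) * edge_weight \<theta> c b * leaf_weight \<theta> k d ?y c else 1)"
      for j b
      by (simp add: sum_configs_by_root_spin[where h = "\<lambda>c. edge_weight \<theta> c b", symmetric]
          sum_edge_tree_weight)
    then show ?thesis
      using assms by (simp add: prod.delta)
  qed
  also have "(\<Sum>b\<in>UNIV. \<Sum>c\<in>UNIV. of_bool (Q c) * edge_weight \<theta> c b * leaf_weight \<theta> k d ?y c)
      = (\<Sum>c\<in>UNIV. \<Sum>b\<in>UNIV. of_bool (Q c) * leaf_weight \<theta> k d ?y c * edge_weight \<theta> c b)"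
    by (subst sum.swap) (auto intro!: sum.cong simp: mult_ac)
  also have "\<dots> = (\<Sum>c\<in>UNIV. of_bool (Q c) * leaf_weight \<theta> k d ?y c)"
    by (simp only: sum_distrib_left[symmetric] sum_edge_weight_right mult_1_right)
  finally show ?thesis .
qed

lemma bc_cond_prob_child:
  assumes "i < k"
  shows "bc_cond_prob \<theta> k (Suc d) (\<lambda>\<sigma>. \<sigma> [i])
      (\<lambda>\<sigma>. \<forall>v\<in>tree_level k (Suc d). hd v = i \<longrightarrow> \<sigma> v = x v)
    = leaf_weight \<theta> k d (\<lambda>v. x (i # v)) True
      / (leaf_weight \<theta> k d (\<lambda>v. x (i # v)) True + leaf_weight \<theta> k d (\<lambda>v. x (i # v)) False)"
proof -
  let ?L = "\<lambda>\<sigma>. \<forall>v\<in>tree_level k (Suc d). hd v = i \<longrightarrow> \<sigma> v = x v"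
  have num: "bc_prob \<theta> k (Suc d) (\<lambda>\<sigma>. \<sigma> [i] \<and> ?L \<sigma>) = leaf_weight \<theta> k d (\<lambda>v. x (i # v)) True / 2"
    using bc_prob_child_event[OF assms, where Q = "\<lambda>c. c"] by (simp add: UNIV_bool)
  have den: "bc_prob \<theta> k (Suc d) ?L
      = (leaf_weight \<theta> k d (\<lambda>v. x (i # v)) True + leaf_weight \<theta> k d (\<lambda>v. x (i # v)) False) / 2"
    using bc_prob_child_event[OF assms, where Q = "\<lambda>_. True"] by (simp add: UNIV_bool)
  show ?thesis
    unfolding bc_cond_prob_def num den by simp
qed

definition child_message :: "real \<Rightarrow> nat \<Rightarrow> nat \<Rightarrow> (nat list \<Rightarrow> bool) \<Rightarrow> bool \<Rightarrow> real" where
  "child_message \<theta> k d y b = (\<Sum>c\<in>UNIV. edge_weight \<theta> c b * leaf_weight \<theta> k d y c)"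

lemma bc_prob_root_event:
  "bc_prob \<theta> k (Suc d) (\<lambda>\<sigma>. P (\<sigma> []) \<and> (\<forall>v\<in>tree_level k (Suc d). \<sigma> v = x v))
    = (\<Sum>b\<in>UNIV. of_bool (P b) * (\<Prod>j<k. child_message \<theta> k d (\<lambda>v. x (j # v)) b)) / 2"
proof -
  let ?A = "\<lambda>j. leaf_agree k d (\<lambda>v. x (j # v))"
  have event: "(\<lambda>\<sigma>. P (\<sigma> []) \<and> (\<forall>v\<in>tree_level k (Suc d). \<sigma> v = x v))
      = (\<lambda>\<sigma>. P (\<sigma> []) \<and> (\<forall>j<k. ?A j (subtree k d \<sigma> j)))"
    using leaves_agree_Suc_iff[of k d "\<lambda>_. True" _ x] by simp
  have message: "(\<Sum>\<tau>\<in>configs k d. of_bool (?A j \<tau>) * edge_weight \<theta> (\<tau> []) b * tree_weight \<theta> k d \<tau>)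
      = child_message \<theta> k d (\<lambda>v. x (j # v)) b" for j b
    using sum_configs_by_root_spin[where Q = "\<lambda>_. True" and h = "\<lambda>c. edge_weight \<theta> c b"]
    unfolding child_message_def by simp
  show ?thesis
    unfolding event bc_prob_Suc_factor[where P = P and A = ?A] message ..
qed

lemma bc_cond_prob_root:
  "bc_cond_prob \<theta> k (Suc d) (\<lambda>\<sigma>. \<sigma> []) (\<lambda>\<sigma>. \<forall>v\<in>tree_level k (Suc d). \<sigma> v = x v)
    = (\<Prod>j<k. child_message \<theta> k d (\<lambda>v. x (j # v)) True)
      / ((\<Prod>j<k. child_message \<theta> k d (\<lambda>v. x (j # v)) True)
         + (\<Prod>j<k. child_message \<theta> k d (\<lambda>v. x (j # v)) False))"
proof -
  let ?L = "\<lambda>\<sigma>. \<forall>v\<in>tree_level k (Suc d). \<sigma> v = x v"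
  have num: "bc_prob \<theta> k (Suc d) (\<lambda>\<sigma>. \<sigma> [] \<and> ?L \<sigma>)
      = (\<Prod>j<k. child_message \<theta> k d (\<lambda>v. x (j # v)) True) / 2"
    using bc_prob_root_event[where P = "\<lambda>c. c"] by (simp add: UNIV_bool)
  have den: "bc_prob \<theta> k (Suc d) ?L
      = ((\<Prod>j<k. child_message \<theta> k d (\<lambda>v. x (j # v)) True)
         + (\<Prod>j<k. child_message \<theta> k d (\<lambda>v. x (j # v)) False)) / 2"
    using bc_prob_root_event[where P = "\<lambda>_. True"] by (simp add: UNIV_bool)
  show ?thesis
    unfolding bc_cond_prob_def num den by simp
qed

lemma leaf_weight_nonneg: "\<bar>\<theta>\<bar> < 1 \<Longrightarrow> 0 \<le> leaf_weight \<theta> k d y c"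
  unfolding leaf_weight_def by (intro sum_nonneg) (simp add: less_imp_le tree_weight_pos)

lemma leaf_weight_sum_pos:
  assumes "\<bar>\<theta>\<bar> < 1"
  shows "0 < leaf_weight \<theta> k d y True + leaf_weight \<theta> k d y False"
proof -
  define \<tau>\<^sub>0 where "\<tau>\<^sub>0 = restrict y (tree_vertices k d)"
  have "\<tau>\<^sub>0 \<in> configs k d" and "leaf_agree k d y \<tau>\<^sub>0"
    using tree_level_subset_vertices by (auto simp: \<tau>\<^sub>0_def configs_def leaf_agree_def)
  then have "0 < (\<Sum>\<tau>\<in>configs k d. of_bool (leaf_agree k d y \<tau>) * tree_weight \<theta> k d \<tau>)"
    using assms
    by (intro sum_pos2[where i = \<tau>\<^sub>0]) (simp_all add: finite_configs tree_weight_pos less_imp_le)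
  also have "\<dots> = leaf_weight \<theta> k d y True + leaf_weight \<theta> k d y False"
    using sum_configs_by_root_spin[where Q = "\<lambda>_. True" and h = "\<lambda>_. 1"]
    by (simp add: UNIV_bool)
  finally show ?thesis .
qed

lemma majority_posterior_bound:
  fixes a b :: "nat \<Rightarrow> real"
  assumes nonneg: "\<And>j. j < 6 \<Longrightarrow> 0 \<le> a j \<and> 0 \<le> b j"
    and pos: "\<And>j. j < 6 \<Longrightarrow> 0 < a j + b j"
    and G: "G \<subseteq> {..<6}" "4 \<le> card G"
    and good: "\<And>j. j \<in> G \<Longrightarrow> 19 * b j \<le> a j"
  shows "19/20 \<le> (\<Prod>j<6. 19/20 * a j + 1/20 * b j)
      / ((\<Prod>j<6. 19/20 * a j + 1/20 * b j) + (\<Prod>j<6. 1/20 * a j + 19/20 * b j))"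
proof -
  define up where "up j = 19/20 * a j + 1/20 * b j" for j
  define dn where "dn j = 1/20 * a j + 19/20 * b j" for j
  have up_pos: "0 < up j" if "j < 6" for j
    using nonneg[OF that] pos[OF that] unfolding up_def by linarith
  have up_prod_pos: "0 < prod up {..<6}"
    using up_pos by (intro prod_pos) simp
  have dn_nonneg: "0 \<le> dn j" if "j < 6" for j
    using nonneg[OF that] unfolding dn_def by simp
  have "prod dn {..<6} = prod dn ({..<6} - G) * prod dn G"
    using G by (simp add: prod.subset_diff)
  also have "\<dots> \<le> (\<Prod>j\<in>{..<6} - G. 19 * up j) * (\<Prod>j\<in>G. 19/181 * up j)"
  proof (intro mult_mono prod_mono prod_nonneg conjI)
    fix j assume "j \<in> {..<6} - G"
    then show "dn j \<le> 19 * up j" using nonneg[of j] unfolding up_def dn_def by auto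
  next
    fix j assume "j \<in> G"
    \<comment> \<open>dn/up = (a + 19 b)/(19 a + b) decreases in a/b and equals 19/181 at a = 19 b\<close>
    then show "dn j \<le> 19/181 * up j" using good[of j] unfolding up_def dn_def by simp
  qed (use G dn_nonneg up_pos in \<open>auto simp: less_imp_le\<close>)
  also have "\<dots> = 19 ^ card ({..<6} - G) * (19/181) ^ card G * (prod up ({..<6} - G) * prod up G)"
    by (simp only: prod.distrib prod_constant mult_ac)
  also have "\<dots> = 19 ^ (6 - card G) * (19/181) ^ card G * prod up {..<6}"
    using G by (simp add: card_Diff_subset finite_subset prod.subset_diff[OF G(1) finite_lessThan, symmetric])
  also have "\<dots> \<le> 1/19 * prod up {..<6}"
  proof (rule mult_right_mono)
    have "card G \<le> 6" using card_mono[OF _ G(1)] by simp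
    with G(2) have "card G \<in> {4, 5, 6}" by auto
    then show "19 ^ (6 - card G) * (19/181) ^ card G \<le> (1/19 :: real)" by (auto simp: power_divide)
  qed (use up_prod_pos in simp)
  finally have "prod dn {..<6} \<le> prod up {..<6} / 19" by simp
  moreover have "0 \<le> prod dn {..<6}"
    using dn_nonneg by (intro prod_nonneg) simp
  ultimately show ?thesis
    using up_prod_pos
    unfolding up_def[symmetric] dn_def[symmetric] by (simp add: field_simps)
qed

theorem mainTheorem18:
  fixes d :: nat and x :: "nat list \<Rightarrow> bool"
  assumes "d \<ge> 1"
  assumes "card {i. i < 6 \<and>
             bc_cond_prob (9/10) 6 d (\<lambda>\<sigma>. \<sigma> [i])
               (\<lambda>\<sigma>. \<forall>v \<in> tree_level 6 d. hd v = i \<longrightarrow> \<sigma> v = x v) \<ge> 0.95} \<ge> 4"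
  shows "bc_cond_prob (9/10) 6 d (\<lambda>\<sigma>. \<sigma> [])
           (\<lambda>\<sigma>. \<forall>v \<in> tree_level 6 d. \<sigma> v = x v) \<ge> 19/20"
proof -
  obtain d' where d: "d = Suc d'" using assms(1) by (cases d) auto
  define a where "a j = leaf_weight (9/10) 6 d' (\<lambda>v. x (j # v)) True" for j
  define b where "b j = leaf_weight (9/10) 6 d' (\<lambda>v. x (j # v)) False" for j
  define G where "G = {i. i < 6 \<and>
      bc_cond_prob (9/10) 6 d (\<lambda>\<sigma>. \<sigma> [i]) (\<lambda>\<sigma>. \<forall>v \<in> tree_level 6 d. hd v = i \<longrightarrow> \<sigma> v = x v) \<ge> 0.95}"
  have nonneg: "0 \<le> a j \<and> 0 \<le> b j" and pos: "0 < a j + b j" for j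
    unfolding a_def b_def by (simp_all add: leaf_weight_nonneg leaf_weight_sum_pos)
  have good: "19 * b j \<le> a j" if "j \<in> G" for j
  proof -
    have "0.95 \<le> a j / (a j + b j)"
      using that bc_cond_prob_child[of j 6 "9/10" d' x] unfolding G_def d a_def b_def by auto
    then show ?thesis using pos[of j] by (simp add: field_simps)
  qed
  have "G \<subseteq> {..<6}" "4 \<le> card G"
    using assms(2) unfolding G_def by auto
  with nonneg pos good have "19/20 \<le> (\<Prod>j<6. 19/20 * a j + 1/20 * b j)
      / ((\<Prod>j<6. 19/20 * a j + 1/20 * b j) + (\<Prod>j<6. 1/20 * a j + 19/20 * b j))"
    by (intro majority_posterior_bound) auto
  moreover have "child_message (9/10) 6 d' (\<lambda>v. x (j # v)) True = 19/20 * a j + 1/20 * b j"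
    and "child_message (9/10) 6 d' (\<lambda>v. x (j # v)) False = 1/20 * a j + 19/20 * b j" for j
    unfolding child_message_def edge_weight_def a_def b_def by (simp_all add: UNIV_bool)
  ultimately show ?thesis
    unfolding d bc_cond_prob_root by simp
qed

end
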